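(* Let $p\in\mathcal{X}$. Then there exists a pathless polynomial $q\in\mathcal{X}$ such that $p\equiv q \pmod{\mathcal{J}}$.
   Context: Let $\mathbf{k}$ be a commutative ring, let $\beta,\alpha\in\mathbf{k}$, and let $n$ be a positive integer; write $[m]=\{1,2,\dots,m\}$. Let $\mathcal{X}=\mathbf{k}[x_{i,j}\mid 1\le i<j\le n]$ be the polynomial ring over $\mathbf{k}$ in the $n(n-1)/2$ indeterminates $x_{i,j}$, and let $\mathfrak{M}$ be the set of monomials (without coefficients) in these indeterminates. Let $\mathcal{J}$ be the ideal of $\mathcal{X}$ generated by all elements $x_{i,j}x_{j,k}-x_{i,k}(x_{i,j}+x_{j,k}+\beta)-\alpha$ for $1\le i<j<k\le n$. A monomial $\mathfrak{m}\in\mathfrak{M}$ is pathless if there is no triple $(i,j,k)$ with $1\le i<j<k\le n$ and $x_{i,j}x_{j,k}\mid\mathfrak{m}$. A polynomial in $\mathcal{X}$ is pathless if it is a $\mathbf{k}$-linear combination of pathless monomials. *)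

theory Defs
  imports "HOL-Library.Poly_Mapping"
begin

type_synonym monom = "(nat \<times> nat) \<Rightarrow>\<^sub>0 nat"
type_synonym 'k mpoly = "monom \<Rightarrow>\<^sub>0 'k"

definition var :: "nat \<Rightarrow> nat \<Rightarrow> 'k::comm_ring_1 mpoly" where
  "var i j = Poly_Mapping.single (Poly_Mapping.single (i, j) 1) 1"

definition var_idx :: "nat \<Rightarrow> (nat \<times> nat) set" where
  "var_idx n = {(i, j). 1 \<le> i \<and> i < j \<and> j \<le> n}"

definition polyX :: "nat \<Rightarrow> 'k::comm_ring_1 mpoly set" where
  "polyX n = {p. \<forall>m \<in> Poly_Mapping.keys (p::'k mpoly). Poly_Mapping.keys (m::monom) \<subseteq> var_idx n}"

definition ideal_gen :: "'a::comm_ring_1 set \<Rightarrow> 'a set \<Rightarrow> 'a set" where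
  "ideal_gen R G = {\<Sum>g\<in>S. c g * g | S c. finite S \<and> S \<subseteq> G \<and> (\<forall>g\<in>S. c g \<in> R)}"

definition J_gens :: "'k::comm_ring_1 \<Rightarrow> 'k \<Rightarrow> nat \<Rightarrow> 'k mpoly set" where
  "J_gens \<beta> \<alpha> n = {var i j * var j k - var i k * (var i j + var j k + Poly_Mapping.single 0 \<beta>)
                        - Poly_Mapping.single 0 \<alpha> | i j k. 1 \<le> i \<and> i < j \<and> j < k \<and> k \<le> n}"

definition idealJ :: "'k::comm_ring_1 \<Rightarrow> 'k \<Rightarrow> nat \<Rightarrow> 'k mpoly set" where
  "idealJ \<beta> \<alpha> n = ideal_gen (polyX n) (J_gens \<beta> \<alpha> n)"

definition pathless_monom :: "nat \<Rightarrow> monom \<Rightarrow> bool" where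
  "pathless_monom n m \<longleftrightarrow> Poly_Mapping.keys m \<subseteq> var_idx n \<and>
     \<not> (\<exists>i j k. 1 \<le> i \<and> i < j \<and> j < k \<and> k \<le> n \<and>
              Poly_Mapping.lookup m (i, j) \<ge> 1 \<and> Poly_Mapping.lookup m (j, k) \<ge> 1)"

definition pathless :: "nat \<Rightarrow> 'k::comm_ring_1 mpoly \<Rightarrow> bool" where
  "pathless n q \<longleftrightarrow> (\<forall>m \<in> Poly_Mapping.keys q. pathless_monom n m)"

end

theory Submission
  imports Defs
begin

text \<open>Give the indeterminate x_{i,j} the weight n - (j - i) and a monomial the sum of the weights
  of its factors. A monomial u x_{i,j} x_{j,k} is congruent modulo J to
  u x_{i,k} x_{i,j} + u x_{i,k} x_{j,k} + \<beta> u x_{i,k} + \<alpha> u, and each of these monomials is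
  strictly lighter, because the longer edge x_{i,k} weighs less than both x_{i,j} and x_{j,k}.
  So every monomial, and by linearity every polynomial, reduces to a pathless one by
  well-founded induction on the weight.\<close>

abbreviation var_exp :: "nat \<Rightarrow> nat \<Rightarrow> monom" where
  "var_exp i j \<equiv> Poly_Mapping.single (i, j) 1"

abbreviation monomial :: "monom \<Rightarrow> 'k::comm_ring_1 mpoly" where
  "monomial u \<equiv> Poly_Mapping.single u 1"

abbreviation const :: "'k::comm_ring_1 \<Rightarrow> 'k mpoly" where
  "const c \<equiv> Poly_Mapping.single 0 c"

lemma poly_mapping_expansion:
  "(\<Sum>m\<in>Poly_Mapping.keys p. Poly_Mapping.single m (Poly_Mapping.lookup p m)) = p"
  by (rule poly_mapping_eqI) (simp add: lookup_sum lookup_single when_def in_keys_iff)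

lemma polyX_add: "a \<in> polyX n \<Longrightarrow> b \<in> polyX n \<Longrightarrow> a + b \<in> polyX n"
  unfolding polyX_def using keys_add[of a b] by blast

lemma polyX_mult:
  assumes "a \<in> polyX n" "b \<in> polyX n"
  shows "a * b \<in> polyX n"
proof -
  have "Poly_Mapping.keys (u + v) \<subseteq> var_idx n"
    if "u \<in> Poly_Mapping.keys a" "v \<in> Poly_Mapping.keys b" for u v
    using that assms keys_add[of u v] unfolding polyX_def by blast
  then show ?thesis
    unfolding polyX_def using keys_mult[of a b] by blast
qed

lemma monomial_in_polyX:
  "Poly_Mapping.keys m \<subseteq> var_idx n \<Longrightarrow> Poly_Mapping.single m c \<in> polyX n"
  unfolding polyX_def by simp

lemma const_in_polyX: "const c \<in> polyX n"
  by (rule monomial_in_polyX) simp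

lemma ideal_genI:
  assumes "x = (\<Sum>g\<in>S. c g * g)" "finite S" "S \<subseteq> G" "\<And>g. g \<in> S \<Longrightarrow> c g \<in> R"
  shows "x \<in> ideal_gen R G"
  unfolding ideal_gen_def using assms by blast

lemma ideal_genE:
  assumes "x \<in> ideal_gen R G"
  obtains c S where "x = (\<Sum>g\<in>S. c g * g)" "finite S" "S \<subseteq> G" "\<And>g. g \<in> S \<Longrightarrow> c g \<in> R"
  using assms unfolding ideal_gen_def by blast

lemma ideal_gen_0: "0 \<in> ideal_gen R G"
  by (rule ideal_genI[where S="{}"]) simp_all

lemma ideal_gen_generator: "g \<in> G \<Longrightarrow> 1 \<in> R \<Longrightarrow> g \<in> ideal_gen R G"
  by (rule ideal_genI[where S="{g}" and c="\<lambda>_. 1"]) simp_all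

lemma ideal_gen_add:
  assumes "a \<in> ideal_gen R G" "b \<in> ideal_gen R G"
    and "0 \<in> R" and "\<And>x y. x \<in> R \<Longrightarrow> y \<in> R \<Longrightarrow> x + y \<in> R"
  shows "a + b \<in> ideal_gen R G"
proof -
  obtain c S where a: "a = (\<Sum>g\<in>S. c g * g)" "finite S" "S \<subseteq> G" "\<And>g. g \<in> S \<Longrightarrow> c g \<in> R"
    using assms(1) by (elim ideal_genE) blast
  obtain d T where b: "b = (\<Sum>g\<in>T. d g * g)" "finite T" "T \<subseteq> G" "\<And>g. g \<in> T \<Longrightarrow> d g \<in> R"
    using assms(2) by (elim ideal_genE) blast
  define e where "e g = (if g \<in> S then c g else 0) + (if g \<in> T then d g else 0)" for g
  have "a + b = (\<Sum>g\<in>S \<union> T. if g \<in> S then c g * g else 0)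
      + (\<Sum>g\<in>S \<union> T. if g \<in> T then d g * g else 0)"
    using a b by (simp add: sum.inter_restrict[symmetric] Int_absorb1 Int_absorb2)
  also have "\<dots> = (\<Sum>g\<in>S \<union> T. e g * g)"
    unfolding sum.distrib[symmetric] by (rule sum.cong) (simp_all add: e_def distrib_right)
  finally show ?thesis
  proof (rule ideal_genI)
    show "finite (S \<union> T)" "S \<union> T \<subseteq> G"
      using a b by simp_all
    show "e g \<in> R" for g
      unfolding e_def using a(4) b(4) assms(3,4) by simp
  qed
qed

lemma ideal_gen_mult:
  assumes "a \<in> ideal_gen R G" "r \<in> R" and "\<And>x y. x \<in> R \<Longrightarrow> y \<in> R \<Longrightarrow> x * y \<in> R"
  shows "r * a \<in> ideal_gen R G"
proof -
  obtain c S where a: "a = (\<Sum>g\<in>S. c g * g)" "finite S" "S \<subseteq> G" "\<And>g. g \<in> S \<Longrightarrow> c g \<in> R"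
    using assms(1) by (elim ideal_genE) blast
  then have "r * a = (\<Sum>g\<in>S. (r * c g) * g)"
    by (simp add: sum_distrib_left mult.assoc)
  then show ?thesis
    by (rule ideal_genI) (use a assms(2,3) in simp_all)
qed

lemma idealJ_add: "a \<in> idealJ \<beta> \<alpha> n \<Longrightarrow> b \<in> idealJ \<beta> \<alpha> n \<Longrightarrow> a + b \<in> idealJ \<beta> \<alpha> n"
  unfolding idealJ_def by (rule ideal_gen_add[OF _ _ const_in_polyX[of 0, unfolded single_zero] polyX_add])

lemma idealJ_mult: "a \<in> idealJ \<beta> \<alpha> n \<Longrightarrow> r \<in> polyX n \<Longrightarrow> r * a \<in> idealJ \<beta> \<alpha> n"
  unfolding idealJ_def by (rule ideal_gen_mult[OF _ _ polyX_mult])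

lemma J_gens_subset_idealJ: "J_gens \<beta> \<alpha> n \<subseteq> idealJ \<beta> \<alpha> n"
  using ideal_gen_generator[OF _ const_in_polyX[of 1, unfolded single_one]]
  unfolding idealJ_def by blast

lemma pathless_add: "pathless n a \<Longrightarrow> pathless n b \<Longrightarrow> pathless n (a + b)"
  unfolding pathless_def using keys_add[of a b] by blast

lemma pathless_const_mult:
  assumes "pathless n a"
  shows "pathless n (const c * a)"
proof -
  have "Poly_Mapping.keys (const c * a) \<subseteq> Poly_Mapping.keys a"
    using keys_mult[of "const c" a] by (auto split: if_splits)
  then show ?thesis
    using assms unfolding pathless_def by blast
qed

lemma pathless_imp_polyX: "pathless n q \<Longrightarrow> q \<in> polyX n"
  unfolding pathless_def polyX_def pathless_monom_def by blast

definition pathless_reducible :: "'k::comm_ring_1 \<Rightarrow> 'k \<Rightarrow> nat \<Rightarrow> 'k mpoly \<Rightarrow> bool" where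
  "pathless_reducible \<beta> \<alpha> n p \<longleftrightarrow> (\<exists>q\<in>polyX n. pathless n q \<and> p - q \<in> idealJ \<beta> \<alpha> n)"

lemma pathless_imp_pathless_reducible: "pathless n p \<Longrightarrow> pathless_reducible \<beta> \<alpha> n p"
  unfolding pathless_reducible_def idealJ_def using pathless_imp_polyX ideal_gen_0 by fastforce

lemma pathless_reducible_add:
  assumes "pathless_reducible \<beta> \<alpha> n a" "pathless_reducible \<beta> \<alpha> n b"
  shows "pathless_reducible \<beta> \<alpha> n (a + b)"
proof -
  obtain q r where "pathless n q" "a - q \<in> idealJ \<beta> \<alpha> n" "pathless n r" "b - r \<in> idealJ \<beta> \<alpha> n"
    using assms unfolding pathless_reducible_def by blast
  then have "pathless n (q + r)" "(a + b) - (q + r) \<in> idealJ \<beta> \<alpha> n"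
    using pathless_add idealJ_add[of "a - q" _ _ _ "b - r"] by (auto simp: algebra_simps)
  then show ?thesis
    unfolding pathless_reducible_def using pathless_imp_polyX by blast
qed

lemma pathless_reducible_const_mult:
  assumes "pathless_reducible \<beta> \<alpha> n a"
  shows "pathless_reducible \<beta> \<alpha> n (const c * a)"
proof -
  obtain q where "pathless n q" "a - q \<in> idealJ \<beta> \<alpha> n"
    using assms unfolding pathless_reducible_def by blast
  then have "pathless n (const c * q)" "const c * a - const c * q \<in> idealJ \<beta> \<alpha> n"
    using pathless_const_mult idealJ_mult[OF _ const_in_polyX, of "a - q"]
    by (simp_all add: right_diff_distrib)
  then show ?thesis
    unfolding pathless_reducible_def using pathless_imp_polyX by blast
qed

lemma pathless_reducible_sum:
  "(\<And>x. x \<in> A \<Longrightarrow> pathless_reducible \<beta> \<alpha> n (f x)) \<Longrightarrow> pathless_reducible \<beta> \<alpha> n (sum f A)"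
  by (induction A rule: infinite_finite_induct)
    (simp_all add: pathless_reducible_add pathless_imp_pathless_reducible pathless_def)

lemma pathless_reducible_congruent:
  assumes "p - p' \<in> idealJ \<beta> \<alpha> n" "pathless_reducible \<beta> \<alpha> n p'"
  shows "pathless_reducible \<beta> \<alpha> n p"
proof -
  obtain q where "q \<in> polyX n" "pathless n q" "p' - q \<in> idealJ \<beta> \<alpha> n"
    using assms(2) unfolding pathless_reducible_def by blast
  moreover have "p - q = (p - p') + (p' - q)" by simp
  ultimately show ?thesis
    unfolding pathless_reducible_def using assms(1) idealJ_add by metis
qed

definition monom_weight :: "nat \<Rightarrow> monom \<Rightarrow> nat" where
  "monom_weight n m = (\<Sum>v\<in>Poly_Mapping.keys m. Poly_Mapping.lookup m v * (n - (snd v - fst v)))"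

lemma monom_weight_add: "monom_weight n (a + b) = monom_weight n a + monom_weight n b"
  unfolding monom_weight_def by (rule setsum_keys_plus_distrib) (auto simp: distrib_right)

lemma monom_weight_var_exp: "monom_weight n (var_exp i j) = n - (j - i)"
  unfolding monom_weight_def by simp

lemma monom_path_decomposition:
  assumes "Poly_Mapping.keys m \<subseteq> var_idx n" "\<not> pathless_monom n m"
  obtains i j k u where "1 \<le> i" "i < j" "j < k" "k \<le> n"
    and "m = u + var_exp i j + var_exp j k" and "Poly_Mapping.keys u \<subseteq> var_idx n"
proof -
  obtain i j k where ijk: "1 \<le> i" "i < j" "j < k" "k \<le> n"
    and path: "Poly_Mapping.lookup m (i, j) \<ge> 1" "Poly_Mapping.lookup m (j, k) \<ge> 1"
    using assms unfolding pathless_monom_def by blast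
  define u where "u = m - var_exp i j - var_exp j k"
  have "m = u + var_exp i j + var_exp j k"
    by (rule poly_mapping_eqI)
      (use ijk path in \<open>auto simp: u_def lookup_add lookup_minus lookup_single when_def\<close>)
  moreover have "Poly_Mapping.keys u \<subseteq> var_idx n"
    using assms(1) by (auto simp: u_def in_keys_iff lookup_minus)
  ultimately show ?thesis
    using that ijk by blast
qed

lemma monomial_times_J_gen:
  fixes \<beta> \<alpha> :: "'k::comm_ring_1"
  shows "monomial u * (var i j * var j k - var i k * (var i j + var j k + const \<beta>) - const \<alpha>)
    = monomial (u + var_exp i j + var_exp j k)
      - (monomial (u + var_exp i k + var_exp i j) + monomial (u + var_exp i k + var_exp j k)
        + const \<beta> * monomial (u + var_exp i k) + const \<alpha> * monomial u)"
  by (simp add: var_def mult_single algebra_simps)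

lemma path_monomial_congruence:
  fixes \<beta> \<alpha> :: "'k::comm_ring_1"
  assumes "1 \<le> i" "i < j" "j < k" "k \<le> n" "Poly_Mapping.keys u \<subseteq> var_idx n"
  shows "monomial (u + var_exp i j + var_exp j k)
      - (monomial (u + var_exp i k + var_exp i j) + monomial (u + var_exp i k + var_exp j k)
        + const \<beta> * monomial (u + var_exp i k) + const \<alpha> * monomial u) \<in> idealJ \<beta> \<alpha> n"
proof -
  have "var i j * var j k - var i k * (var i j + var j k + const \<beta>) - const \<alpha> \<in> J_gens \<beta> \<alpha> n"
    unfolding J_gens_def using assms(1-4) by blast
  then have "monomial u * (var i j * var j k - var i k * (var i j + var j k + const \<beta>) - const \<alpha>)
      \<in> idealJ \<beta> \<alpha> n"
    using J_gens_subset_idealJ by (intro idealJ_mult monomial_in_polyX assms(5)) blast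
  then show ?thesis
    unfolding monomial_times_J_gen .
qed

lemma path_rewrite_lighter:
  assumes "1 \<le> i" "i < j" "j < k" "k \<le> n"
  shows "monom_weight n (u + var_exp i k + var_exp i j) < monom_weight n (u + var_exp i j + var_exp j k)"
    and "monom_weight n (u + var_exp i k + var_exp j k) < monom_weight n (u + var_exp i j + var_exp j k)"
    and "monom_weight n (u + var_exp i k) < monom_weight n (u + var_exp i j + var_exp j k)"
    and "monom_weight n u < monom_weight n (u + var_exp i j + var_exp j k)"
  using assms unfolding monom_weight_add monom_weight_var_exp by linarith+

lemma monomial_pathless_reducible:
  fixes \<beta> \<alpha> :: "'k::comm_ring_1"
  shows "Poly_Mapping.keys m \<subseteq> var_idx n \<Longrightarrow> pathless_reducible \<beta> \<alpha> n (monomial m)"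
proof (induction m rule: measure_induct_rule[of "monom_weight n"])
  case (less m)
  show ?case
  proof (cases "pathless_monom n m")
    case True
    then show ?thesis
      by (intro pathless_imp_pathless_reducible) (simp add: pathless_def)
  next
    case False
    obtain i j k u where ijk: "1 \<le> i" "i < j" "j < k" "k \<le> n"
      and m: "m = u + var_exp i j + var_exp j k" and u: "Poly_Mapping.keys u \<subseteq> var_idx n"
      using less.prems False by (rule monom_path_decomposition)
    have keys_extend: "Poly_Mapping.keys (v + var_exp a b) \<subseteq> var_idx n"
      if "Poly_Mapping.keys v \<subseteq> var_idx n" "(a, b) \<in> var_idx n" for v a b
      using that keys_add[of v "var_exp a b"] by auto
    have vars: "(i, j) \<in> var_idx n" "(j, k) \<in> var_idx n" "(i, k) \<in> var_idx n"
      using ijk by (auto simp: var_idx_def)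
    note lighter = path_rewrite_lighter[OF ijk, of u, folded m]
    have "pathless_reducible \<beta> \<alpha> n (monomial (u + var_exp i k + var_exp i j)
        + monomial (u + var_exp i k + var_exp j k)
        + const \<beta> * monomial (u + var_exp i k) + const \<alpha> * monomial u)"
      by (intro pathless_reducible_add pathless_reducible_const_mult less.IH lighter keys_extend u vars)
    then show ?thesis
      using path_monomial_congruence[OF ijk u, of \<beta> \<alpha>, folded m]
      by (rule pathless_reducible_congruent[rotated])
  qed
qed

theorem proposition2p5:
  fixes \<beta> \<alpha> :: "'k::comm_ring_1" and n :: nat and p :: "'k mpoly"
  assumes "n \<ge> 1" and "p \<in> polyX n"
  shows "\<exists>q \<in> polyX n. pathless n q \<and> p - q \<in> idealJ \<beta> \<alpha> n"
proof -
  have "(\<Sum>m\<in>Poly_Mapping.keys p. const (Poly_Mapping.lookup p m) * monomial m) = p"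
    using poly_mapping_expansion[of p] by (simp add: mult_single)
  moreover have "pathless_reducible \<beta> \<alpha> n
      (\<Sum>m\<in>Poly_Mapping.keys p. const (Poly_Mapping.lookup p m) * monomial m)"
    using assms(2) unfolding polyX_def
    by (intro pathless_reducible_sum pathless_reducible_const_mult monomial_pathless_reducible) blast
  ultimately show ?thesis
    unfolding pathless_reducible_def by simp
qed

end
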